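(* Let $F$ be a Ferrers diagram of semiperimeter $n+1$, $T\in\mathsf{EWtab}(F)$ and $(a_1,\ldots,a_n)\in\mathbb{Z}^n$. Then $(T,(a_1,\ldots,a_n))$ is a decorated EW-tableau if and only if $(\Psi(T),(a_1,\ldots,a_n))$ is a (stable) decorated permutation.
   Context: Ferrers diagrams and graphs: a Ferrers diagram $F$ (English convention) of semiperimeter $n+1$ has rows and columns labeled by $0,\ldots,n$: the $n+1$ unit steps of its south-east boundary path, traversed from top-right to bottom-left, are labeled $0,\ldots,n$; a vertical step labels the row it bounds, a horizontal step the column it bounds (top row labeled $0$). $\mathsf{rows}(F)$, $\mathsf{cols}(F)$ are the label sets; $F$ has a cell in row $i$, column $j$ iff $i<j$. $G(F)$ has vertex set $\{0,\ldots,n\}$ with edges $\{i,j\}$ for $i\in\mathsf{rows}(F)$, $j\in\mathsf{cols}(F)$, $i<j$. Sandpile model on $G(F)$ with sink $0$: configurations $c\in\mathbb{N}^n$; non-sink $v$ unstable if $c_v\ge\deg(v)$; toppling sends one grain to each neighbour (grains to $0$ disappear); toppling the sink adds one grain to each neighbour of $0$. Canonical toppling of a recurrent configuration $c$: topple the sink ($U^{(0)}_c=\{0\}$), then alternately topple simultaneously all unstable vertices in $\mathsf{cols}(F)$ ($V^{(1)}_c$), all unstable in $\mathsf{rows}(F)$ ($U^{(1)}_c$), etc.; $\mathsf{CanonTop}(c)=(U^{(0)}_c,V^{(1)}_c,U^{(1)}_c,\ldots)$ is an ordered partition of $\{0,\ldots,n\}$. EW-tableaux: $0/1$-fillings $T$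 of $F$ with top row all 1s, a 0 in every other row, and no rectangle with 0s in two diagonally opposite corners and 1s in the other two; $\mathsf{EWtab}(F)$ is their set. $\phi_{TC}(T)$ is the (recurrent) configuration with $c_i$ = number of 1s in row $i$ ($i\in\mathsf{rows}(F)$), $c_i$ = number of 0s in column $i$ ($i\in\mathsf{cols}(F)$). $\mathsf{CanonTop}(T):=\mathsf{CanonTop}(\phi_{TC}(T))=(U^{(0)}_T,V^{(1)}_T,U^{(1)}_T,\ldots)$. $\Psi(T)$ is the word $\mathsf{inc}(V^{(1)}_T)\,\mathsf{dec}(U^{(1)}_T)\,\mathsf{inc}(V^{(2)}_T)\,\mathsf{dec}(U^{(2)}_T)\cdots$ (inc/dec = increasing/decreasing listing); it is a permutation of $[n]$ (this is the known bijection from $\mathsf{EWtab}(F)$ onto permutations of $[n]$ whose set of descent bottoms is $\mathsf{rows}(F)\setminus\{0\}$). A decorated EW-tableau is a pair $(T,(x_1,\ldots,x_n))$ with $T\in\mathsf{EWtab}(F)$, $0\le x_i<$ (number of 0s in row $i$ of $T$) for $i\in\mathsf{rows}(F)$, and $0\le x_i<$ (number of 1s in column $i$ of $T$) for $i\in\mathsf{cols}(F)$. Permutations: for a permutation $\pi=\pi_1\cdots\pi_n$ of $[n]$, the letter $\pi_i$ is an ascent top if $i=1$ or $\pi_{i-1}<\pi_i$, and a descent bottom if $\pi_{i-1}>\pi_i$. The run decomposition $\mathsf{RunDec}(\pi)=(D^{(0)}_\pi,A^{(1)}_\pi,D^{(1)}_\pi,A^{(2)}_\pi,\ldots)$ has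 $D^{(0)}_\pi=\{0\}$ followed by the sets of letters of the maximal factors of $\pi$ consisting alternately of ascent tops ($A$-blocks) and descent bottoms ($D$-blocks). A (stable) decorated permutation is a pair $(\pi,(a_1,\ldots,a_n))$ with $\pi$ a permutation of $[n]$ such that $0\le a_i<|\{j\in A^{(k)}_\pi: j>i,\ k\le\ell\}|$ if $i\in D^{(\ell)}_\pi$, and $0\le a_i<|\{j\in D^{(k)}_\pi: j<i,\ k<\ell\}|$ if $i\in A^{(\ell)}_\pi$ (here $a_i$ is attached to the letter $i$). *)

theory Defs
  imports Main
begin

text \<open>A Ferrers diagram of semiperimeter n+1 is encoded by n and the set R of row labels
  (labels of the vertical steps of the boundary path); the column labels are the remaining
  labels in {0..n}. The top row is labelled 0 (first step vertical) and, since every column is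
  nonempty, the last step n is horizontal.\<close>

definition ferrers :: "nat \<Rightarrow> nat set \<Rightarrow> bool" where
  "ferrers n R \<longleftrightarrow> R \<subseteq> {0..n} \<and> 0 \<in> R \<and> n \<notin> R"

definition fcols :: "nat \<Rightarrow> nat set \<Rightarrow> nat set" where
  "fcols n R = {0..n} - R"

definition fcell :: "nat \<Rightarrow> nat set \<Rightarrow> nat \<Rightarrow> nat \<Rightarrow> bool" where
  "fcell n R i j \<longleftrightarrow> i \<in> R \<and> j \<in> fcols n R \<and> i < j"

definition fadj :: "nat \<Rightarrow> nat set \<Rightarrow> nat \<Rightarrow> nat \<Rightarrow> bool" where
  "fadj n R u v \<longleftrightarrow> fcell n R u v \<or> fcell n R v u"

definition fdeg :: "nat \<Rightarrow> nat set \<Rightarrow> nat \<Rightarrow> nat" where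
  "fdeg n R v = card {u \<in> {0..n}. fadj n R v u}"

text \<open>Simultaneous toppling of a set S of vertices (the value at the sink 0 is irrelevant).\<close>
definition topple :: "nat \<Rightarrow> nat set \<Rightarrow> nat set \<Rightarrow> (nat \<Rightarrow> int) \<Rightarrow> (nat \<Rightarrow> int)" where
  "topple n R S c = (\<lambda>v. c v - (if v \<in> S then int (fdeg n R v) else 0)
                        + int (card {u \<in> S. fadj n R u v}))"

text \<open>Canonical toppling: step 0 topples the sink; step 2k-1 topples all unstable columns
  (block V^(k)), step 2k all unstable non-sink rows (block U^(k)).\<close>
fun canon_step :: "nat \<Rightarrow> nat set \<Rightarrow> (nat \<Rightarrow> int) \<Rightarrow> nat \<Rightarrow> nat set \<times> (nat \<Rightarrow> int)" where
  "canon_step n R c 0 = ({0}, topple n R {0} c)"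
| "canon_step n R c (Suc k) =
     (let c' = snd (canon_step n R c k);
          S = (if even k then {v \<in> fcols n R. c' v \<ge> int (fdeg n R v)}
               else {v \<in> R. v \<noteq> 0 \<and> c' v \<ge> int (fdeg n R v)})
      in (S, topple n R S c'))"

definition canon_block :: "nat \<Rightarrow> nat set \<Rightarrow> (nat \<Rightarrow> int) \<Rightarrow> nat \<Rightarrow> nat set" where
  "canon_block n R c k = fst (canon_step n R c k)"

definition V_blk :: "nat \<Rightarrow> nat set \<Rightarrow> (nat \<Rightarrow> int) \<Rightarrow> nat \<Rightarrow> nat set" where
  "V_blk n R c k = canon_block n R c (2 * k - 1)"

definition U_blk :: "nat \<Rightarrow> nat set \<Rightarrow> (nat \<Rightarrow> int) \<Rightarrow> nat \<Rightarrow> nat set" where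
  "U_blk n R c k = canon_block n R c (2 * k)"

text \<open>A 0/1 filling is a predicate T with T i j = True meaning a 1 in cell (i,j);
  T is False outside the cells of F.\<close>

definition EWtab :: "nat \<Rightarrow> nat set \<Rightarrow> (nat \<Rightarrow> nat \<Rightarrow> bool) set" where
  "EWtab n R = {T.
     (\<forall>i j. T i j \<longrightarrow> fcell n R i j) \<and>
     (\<forall>j. fcell n R 0 j \<longrightarrow> T 0 j) \<and>
     (\<forall>i \<in> R - {0}. \<exists>j. fcell n R i j \<and> \<not> T i j) \<and>
     (\<forall>i i' j j'. i < i' \<and> j < j' \<and> fcell n R i j \<and> fcell n R i j' \<and>
                  fcell n R i' j \<and> fcell n R i' j' \<longrightarrow>
        \<not> (\<not> T i j \<and> \<not> T i' j' \<and> T i j' \<and> T i' j) \<and>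
        \<not> (\<not> T i j' \<and> \<not> T i' j \<and> T i j \<and> T i' j'))}"

definition row_ones :: "nat \<Rightarrow> nat set \<Rightarrow> (nat \<Rightarrow> nat \<Rightarrow> bool) \<Rightarrow> nat \<Rightarrow> nat" where
  "row_ones n R T i = card {j. fcell n R i j \<and> T i j}"

definition row_zeros :: "nat \<Rightarrow> nat set \<Rightarrow> (nat \<Rightarrow> nat \<Rightarrow> bool) \<Rightarrow> nat \<Rightarrow> nat" where
  "row_zeros n R T i = card {j. fcell n R i j \<and> \<not> T i j}"

definition col_ones :: "nat \<Rightarrow> nat set \<Rightarrow> (nat \<Rightarrow> nat \<Rightarrow> bool) \<Rightarrow> nat \<Rightarrow> nat" where
  "col_ones n R T j = card {i. fcell n R i j \<and> T i j}"

definition col_zeros :: "nat \<Rightarrow> nat set \<Rightarrow> (nat \<Rightarrow> nat \<Rightarrow> bool) \<Rightarrow> nat \<Rightarrow> nat" where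
  "col_zeros n R T j = card {i. fcell n R i j \<and> \<not> T i j}"

text \<open>The configuration phi_TC(T) (value at the sink set to 0, irrelevant).\<close>
definition phiTC :: "nat \<Rightarrow> nat set \<Rightarrow> (nat \<Rightarrow> nat \<Rightarrow> bool) \<Rightarrow> (nat \<Rightarrow> int)" where
  "phiTC n R T = (\<lambda>v. if v \<in> R - {0} then int (row_ones n R T v)
                      else if v \<in> fcols n R then int (col_zeros n R T v) else 0)"

text \<open>Psi(T) = inc(V1) dec(U1) inc(V2) dec(U2) ... (at most n nonempty pairs).\<close>
definition Psi :: "nat \<Rightarrow> nat set \<Rightarrow> (nat \<Rightarrow> nat \<Rightarrow> bool) \<Rightarrow> nat list" where
  "Psi n R T = concat (map (\<lambda>k. sorted_list_of_set (V_blk n R (phiTC n R T) k)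
                                @ rev (sorted_list_of_set (U_blk n R (phiTC n R T) k)))
                          [1..<n+1])"

definition decorated_EW :: "nat \<Rightarrow> nat set \<Rightarrow> (nat \<Rightarrow> nat \<Rightarrow> bool) \<Rightarrow> (nat \<Rightarrow> int) \<Rightarrow> bool" where
  "decorated_EW n R T x \<longleftrightarrow> T \<in> EWtab n R \<and>
     (\<forall>i \<in> R - {0}. 0 \<le> x i \<and> x i < int (row_zeros n R T i)) \<and>
     (\<forall>j \<in> fcols n R. 0 \<le> x j \<and> x j < int (col_ones n R T j))"

definition is_perm :: "nat \<Rightarrow> nat list \<Rightarrow> bool" where
  "is_perm n \<pi> \<longleftrightarrow> distinct \<pi> \<and> set \<pi> = {1..n}"

definition asc_top :: "nat list \<Rightarrow> nat \<Rightarrow> bool" where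
  "asc_top \<pi> p \<longleftrightarrow> p = 0 \<or> \<pi> ! (p - 1) < \<pi> ! p"

definition run_start :: "nat list \<Rightarrow> nat \<Rightarrow> bool" where
  "run_start \<pi> q \<longleftrightarrow> q = 0 \<or> asc_top \<pi> q \<noteq> asc_top \<pi> (q - 1)"

text \<open>Index of the maximal factor containing position p among factors of the same kind.\<close>
definition run_index :: "nat list \<Rightarrow> nat \<Rightarrow> nat" where
  "run_index \<pi> p = card {q. q \<le> p \<and> run_start \<pi> q \<and> asc_top \<pi> q = asc_top \<pi> p}"

definition A_run :: "nat list \<Rightarrow> nat \<Rightarrow> nat set" where
  "A_run \<pi> l = {\<pi> ! p | p. p < length \<pi> \<and> asc_top \<pi> p \<and> run_index \<pi> p = l}"

definition D_run :: "nat list \<Rightarrow> nat \<Rightarrow> nat set" where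
  "D_run \<pi> l = (if l = 0 then {0}
                 else {\<pi> ! p | p. p < length \<pi> \<and> \<not> asc_top \<pi> p \<and> run_index \<pi> p = l})"

definition decorated_perm :: "nat \<Rightarrow> nat list \<Rightarrow> (nat \<Rightarrow> int) \<Rightarrow> bool" where
  "decorated_perm n \<pi> a \<longleftrightarrow> is_perm n \<pi> \<and>
     (\<forall>i \<in> {1..n}. \<forall>l.
        (i \<in> D_run \<pi> l \<longrightarrow>
           0 \<le> a i \<and> a i < int (card {j. \<exists>k \<le> l. j \<in> A_run \<pi> k \<and> j > i})) \<and>
        (i \<in> A_run \<pi> l \<longrightarrow>
           0 \<le> a i \<and> a i < int (card {j. \<exists>k < l. j \<in> D_run \<pi> k \<and> j < i})))"

end

theory Submission
  imports Defs
begin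

text \<open>Orient every edge of G(F) joining row i and column j > i from i to j if T has a 1 in
  cell (i,j), and from j to i otherwise. The EW condition makes this orientation acyclic, and
  \<phi>_TC(T) gives every vertex exactly its out-degree. Hence in the canonical toppling a vertex
  becomes unstable precisely when all its in-neighbours have toppled: the blocks of CanonTop(T)
  are the levels of the orientation, columns at odd and rows at even levels. As every vertex has
  an in-neighbour on the preceding level, the junction between consecutive blocks of \<Psi>(T) is an
  ascent into a column block and a descent into a row block, so the runs of \<Psi>(T) are exactly
  V^(k) = A^(k) and U^(k) = D^(k). Finally a 1 in cell (i,j) means that row i toppled before
  column j, and a 0 the reverse; this turns the bounds on the two kinds of decorations into each
  other.\<close>

lemma sorted_le_last: "sorted xs \<Longrightarrow> x \<in> set xs \<Longrightarrow> x \<le> last xs"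
  for xs :: "'a::linorder list"
  by (induction xs) (auto simp: order_trans)

lemma last_sorted_list_of_set:
  assumes "finite A" "A \<noteq> {}"
  shows "last (sorted_list_of_set A) = Max A"
proof -
  let ?xs = "sorted_list_of_set A"
  have "set ?xs = A" "?xs \<noteq> []" using assms by auto
  then have "last ?xs \<in> A" "\<forall>x\<in>A. x \<le> last ?xs"
    using last_in_set sorted_le_last[of ?xs] by auto
  then show ?thesis using Max_eqI[OF assms(1), of "last ?xs"] by simp
qed

lemma hd_sorted_list_of_set: "finite A \<Longrightarrow> A \<noteq> {} \<Longrightarrow> hd (sorted_list_of_set A) = Min A"
  by (simp add: sorted_list_of_set_nonempty)

lemma distinct_concat_map_upt:
  assumes "\<And>k. k < N \<Longrightarrow> distinct (f k)"
    and "\<And>k k'. k < k' \<Longrightarrow> k' < N \<Longrightarrow> set (f k) \<inter> set (f k') = {}"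
  shows "distinct (concat (map f [0..<N]))"
  using assms by (induction N) (fastforce simp: disjoint_iff)+

lemma concat_map_upt_pairs:
  "concat (map (\<lambda>k. f (2 * k) @ f (Suc (2 * k))) [0..<m]) = concat (map f [0..<2 * m])"
  by (induction m) auto

lemma successively_concat_map_upt:
  assumes "\<And>k. k < N \<Longrightarrow> successively P (f k)"
    and "\<And>k. Suc k < N \<Longrightarrow> f (Suc k) \<noteq> [] \<Longrightarrow> f k \<noteq> [] \<and> P (last (f k)) (hd (f (Suc k)))"
  shows "successively P (concat (map f [0..<N]))"
  using assms
proof (induction N)
  case (Suc N)
  have "P (last (concat (map f [0..<N]))) (hd (f N))"
    if "concat (map f [0..<N]) \<noteq> []" "f N \<noteq> []"
  proof -
    have "N \<noteq> 0" using that(1) by auto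
    then obtain k where N: "N = Suc k" using not0_implies_Suc by blast
    then have "f k \<noteq> []" "P (last (f k)) (hd (f N))" using Suc.prems(2) that(2) by auto
    then show ?thesis using N by simp
  qed
  then show ?case using Suc by (auto simp: successively_append_iff)
qed simp

definition run_step :: "(nat \<Rightarrow> nat) \<Rightarrow> nat \<Rightarrow> nat \<Rightarrow> bool" where
  "run_step \<tau> u v \<longleftrightarrow> (\<tau> v = \<tau> u \<or> \<tau> v = Suc (\<tau> u)) \<and> (u < v \<longleftrightarrow> odd (\<tau> v))"

text \<open>\<tau> numbers the maximal ascending runs (odd labels) and descending runs (even labels)
  of \<pi> consecutively.\<close>
definition run_labelling :: "(nat \<Rightarrow> nat) \<Rightarrow> nat list \<Rightarrow> bool" where
  "run_labelling \<tau> \<pi> \<longleftrightarrow> \<tau> (hd \<pi>) = 1 \<and> successively (run_step \<tau>) \<pi>"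

lemma card_run_starts:
  fixes \<sigma> :: "nat \<Rightarrow> nat"
  assumes "\<sigma> 0 = 1" "\<And>q. q < p \<Longrightarrow> \<sigma> (Suc q) = \<sigma> q \<or> \<sigma> (Suc q) = Suc (\<sigma> q)"
  shows "card {q. q \<le> p \<and> (q = 0 \<or> \<sigma> q \<noteq> \<sigma> (q - 1)) \<and> odd (\<sigma> q) = b}
         = (if b then (\<sigma> p + 1) div 2 else \<sigma> p div 2)"
  using assms(2)
proof (induction p)
  case 0
  have "{q. q \<le> 0 \<and> (q = 0 \<or> \<sigma> q \<noteq> \<sigma> (q - 1)) \<and> odd (\<sigma> q) = b} = (if b then {0} else {})"
    using assms(1) by auto
  then show ?case using assms(1) by simp
next
  case (Suc p)
  define S where "S p = {q. q \<le> p \<and> (q = 0 \<or> \<sigma> q \<noteq> \<sigma> (q - 1)) \<and> odd (\<sigma> q) = b}" for p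
  have IH: "card (S p) = (if b then (\<sigma> p + 1) div 2 else \<sigma> p div 2)"
    using Suc by (simp add: S_def)
  have "finite (S p)" by (rule finite_subset[of _ "{..p}"]) (auto simp: S_def)
  consider "\<sigma> (Suc p) = \<sigma> p" | "\<sigma> (Suc p) = Suc (\<sigma> p)" using Suc.prems by blast
  then show ?case
  proof cases
    case 1
    then have "S (Suc p) = S p" by (auto simp: S_def le_Suc_eq)
    then show ?thesis using IH 1 by (simp add: S_def)
  next
    case 2
    have "Suc p \<notin> S p" by (simp add: S_def)
    moreover have "S (Suc p) = (if odd (Suc (\<sigma> p)) = b then insert (Suc p) (S p) else S p)"
      using 2 by (auto simp: S_def le_Suc_eq)
    ultimately have card: "card (S (Suc p)) = (if odd (Suc (\<sigma> p)) = b then Suc (card (S p)) else card (S p))"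
      using \<open>finite (S p)\<close> by simp
    have arith: "c' = (if b then (Suc m + 1) div 2 else Suc m div 2)"
      if "c' = (if odd (Suc m) = b then Suc c else c)" "c = (if b then (m + 1) div 2 else m div 2)"
      for c c' m :: nat
      using that by (cases b; simp; presburger)
    have "card (S (Suc p)) = (if b then (\<sigma> (Suc p) + 1) div 2 else \<sigma> (Suc p) div 2)"
      unfolding 2 by (rule arith[OF card IH])
    then show ?thesis by (simp only: S_def)
  qed
qed

lemma run_labelling_step:
  assumes "run_labelling \<tau> \<pi>" "Suc q < length \<pi>"
  shows "\<tau> (\<pi> ! Suc q) = \<tau> (\<pi> ! q) \<or> \<tau> (\<pi> ! Suc q) = Suc (\<tau> (\<pi> ! q))"
    and "\<pi> ! q < \<pi> ! Suc q \<longleftrightarrow> odd (\<tau> (\<pi> ! Suc q))"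
  using assms successively_nth[of "run_step \<tau>" \<pi> q] by (auto simp: run_labelling_def run_step_def)

lemma asc_top_iff_odd:
  assumes "run_labelling \<tau> \<pi>" "q < length \<pi>"
  shows "asc_top \<pi> q \<longleftrightarrow> odd (\<tau> (\<pi> ! q))"
proof (cases q)
  case 0
  then show ?thesis using assms by (simp add: asc_top_def run_labelling_def hd_conv_nth)
next
  case (Suc q')
  then show ?thesis
    using assms run_labelling_step(2)[OF assms(1), of q'] by (simp add: asc_top_def)
qed

lemma run_index_eq:
  assumes "run_labelling \<tau> \<pi>" "p < length \<pi>"
  shows "run_index \<pi> p = (\<tau> (\<pi> ! p) + 1) div 2"
proof -
  let ?\<sigma> = "\<lambda>q. \<tau> (\<pi> ! q)"
  have step: "?\<sigma> (Suc q) = ?\<sigma> q \<or> ?\<sigma> (Suc q) = Suc (?\<sigma> q)" if "q < p" for q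
    using assms that run_labelling_step(1)[OF assms(1), of q] by simp
  have "run_start \<pi> q \<longleftrightarrow> q = 0 \<or> ?\<sigma> q \<noteq> ?\<sigma> (q - 1)" if "q \<le> p" for q
  proof (cases q)
    case (Suc q')
    then show ?thesis
      using that assms step[of q'] asc_top_iff_odd[OF assms(1), of q] asc_top_iff_odd[OF assms(1), of q']
      by (auto simp: run_start_def)
  qed (simp add: run_start_def)
  moreover have "asc_top \<pi> q = asc_top \<pi> p \<longleftrightarrow> odd (?\<sigma> q) = odd (?\<sigma> p)" if "q \<le> p" for q
    using that assms asc_top_iff_odd[OF assms(1)] by simp
  ultimately have "run_index \<pi> p
      = card {q. q \<le> p \<and> (q = 0 \<or> ?\<sigma> q \<noteq> ?\<sigma> (q - 1)) \<and> odd (?\<sigma> q) = odd (?\<sigma> p)}"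
    unfolding run_index_def by (intro arg_cong[where f = card] Collect_cong) blast
  also have "\<dots> = (if odd (?\<sigma> p) then (?\<sigma> p + 1) div 2 else ?\<sigma> p div 2)"
    using card_run_starts[of ?\<sigma> p "odd (?\<sigma> p)", OF _ step] assms
    by (cases \<pi>) (auto simp: run_labelling_def)
  also have "\<dots> = (?\<sigma> p + 1) div 2"
    by (cases "odd (?\<sigma> p)") (auto elim: oddE)
  finally show ?thesis .
qed

lemma A_run_eq:
  assumes "run_labelling \<tau> \<pi>"
  shows "A_run \<pi> l = {v \<in> set \<pi>. odd (\<tau> v) \<and> (\<tau> v + 1) div 2 = l}"
proof -
  have "A_run \<pi> l = {\<pi> ! p | p. p < length \<pi> \<and> odd (\<tau> (\<pi> ! p)) \<and> (\<tau> (\<pi> ! p) + 1) div 2 = l}"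
    unfolding A_run_def by (auto simp: asc_top_iff_odd[OF assms] run_index_eq[OF assms])
  also have "\<dots> = {v \<in> set \<pi>. odd (\<tau> v) \<and> (\<tau> v + 1) div 2 = l}"
    by (auto simp: in_set_conv_nth)
  finally show ?thesis .
qed

lemma D_run_eq:
  assumes "run_labelling \<tau> \<pi>" "l \<noteq> 0"
  shows "D_run \<pi> l = {v \<in> set \<pi>. even (\<tau> v) \<and> (\<tau> v + 1) div 2 = l}"
proof -
  have "D_run \<pi> l = {\<pi> ! p | p. p < length \<pi> \<and> even (\<tau> (\<pi> ! p)) \<and> (\<tau> (\<pi> ! p) + 1) div 2 = l}"
    unfolding D_run_def using assms(2)
    by (auto simp: asc_top_iff_odd[OF assms(1)] run_index_eq[OF assms(1)])
  also have "\<dots> = {v \<in> set \<pi>. even (\<tau> v) \<and> (\<tau> v + 1) div 2 = l}"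
    by (auto simp: in_set_conv_nth)
  finally show ?thesis .
qed

locale ew_tableau =
  fixes n :: nat and R :: "nat set" and T :: "nat \<Rightarrow> nat \<Rightarrow> bool"
  assumes ferrers: "ferrers n R" and EWtab: "T \<in> EWtab n R"
begin

lemma rows_le: "R \<subseteq> {0..n}" and zero_row: "0 \<in> R" and last_col: "n \<notin> R"
  using ferrers by (auto simp: ferrers_def)

lemma fcols_iff: "j \<in> fcols n R \<longleftrightarrow> j \<le> n \<and> j \<notin> R"
  by (auto simp: fcols_def)

lemma fcols_subset: "fcols n R \<subseteq> {1..n}"
proof
  fix j assume "j \<in> fcols n R"
  then have "j \<le> n" "j \<notin> R" by (auto simp: fcols_def)
  moreover have "j \<noteq> 0" using \<open>j \<notin> R\<close> zero_row by metis
  ultimately show "j \<in> {1..n}" by simp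
qed

lemma fcell_iff: "fcell n R i j \<longleftrightarrow> i \<in> R \<and> j \<le> n \<and> j \<notin> R \<and> i < j"
  by (auto simp: fcell_def fcols_def)

lemma T_top_row: "fcell n R 0 j \<Longrightarrow> T 0 j"
  and row_has_zero: "i \<in> R \<Longrightarrow> i \<noteq> 0 \<Longrightarrow> \<exists>j. fcell n R i j \<and> \<not> T i j"
  using EWtab by (auto simp: EWtab_def)

lemma no_mixed_rectangle:
  assumes "r < p" "fcell n R r x" "fcell n R p x" "fcell n R p y" "fcell n R r y"
    and "T r x" "\<not> T p x" "T p y" "\<not> T r y"
  shows False
proof -
  have "x \<noteq> y" using assms by auto
  then consider "x < y" | "y < x" by linarith
  then show False
    using EWtab assms unfolding EWtab_def by cases (blast, blast)
qed

definition arc :: "nat \<Rightarrow> nat \<Rightarrow> bool" where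
  "arc u v \<longleftrightarrow> (fcell n R u v \<and> T u v) \<or> (fcell n R v u \<and> \<not> T v u)"

lemma arc_le: "arc u v \<Longrightarrow> u \<le> n \<and> v \<le> n"
  using rows_le by (auto simp: arc_def fcell_iff)

lemma arc_into_col: "v \<notin> R \<Longrightarrow> arc u v \<longleftrightarrow> fcell n R u v \<and> T u v"
  and arc_into_row: "v \<in> R \<Longrightarrow> arc u v \<longleftrightarrow> fcell n R v u \<and> \<not> T v u"
  by (auto simp: arc_def fcell_iff)

lemma not_arc_into_zero: "\<not> arc u 0"
  using T_top_row zero_row by (auto simp: arc_into_row)

lemma arc_between_row_col: "arc u v \<Longrightarrow> u \<in> R \<longleftrightarrow> v \<notin> R"
  by (auto simp: arc_def fcell_iff)

lemma fadj_iff_arc: "fadj n R u v \<longleftrightarrow> arc u v \<or> arc v u"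
  by (auto simp: fadj_def arc_def)

lemma arc_asym: "arc u v \<Longrightarrow> \<not> arc v u"
  by (auto simp: arc_def fcell_iff)

text \<open>The EW condition in terms of the orientation.\<close>
lemma arc_shortcut:
  assumes "r \<in> R" "r < p" "arc r c" "arc c p" "arc p w"
  shows "arc r w"
proof -
  have "c \<notin> R" "p \<in> R" "w \<notin> R" using assms arc_between_row_col by blast+
  then have rc: "fcell n R r c" "T r c" and pc: "fcell n R p c" "\<not> T p c"
    and pw: "fcell n R p w" "T p w"
    using assms(3-5) by (auto simp: arc_into_col arc_into_row)
  then have rw: "fcell n R r w" using assms(1,2) by (auto simp: fcell_iff)
  then have "T r w" using no_mixed_rectangle[OF assms(2) rc(1) pc(1) pw(1)] rc pc pw by blast
  then show ?thesis using rw \<open>w \<notin> R\<close> by (simp add: arc_into_col)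
qed

text \<open>If every vertex of W had an in-neighbour in W, take the
  largest row p in W, an arc r \<rightarrow> c \<rightarrow> p inside W, and a source w of W - {p}:
  then p \<rightarrow> w, and arc_shortcut gives r \<rightarrow> w.\<close>
lemma exists_source:
  assumes "W \<subseteq> {0..n}" "W \<noteq> {}"
  shows "\<exists>w\<in>W. \<forall>u\<in>W. \<not> arc u w"
  using finite_subset[OF assms(1) finite_atLeastAtMost] assms
proof (induction W rule: finite_psubset_induct)
  case (psubset W)
  show ?case
  proof (rule ccontr)
    assume "\<not> ?thesis"
    then have pred: "\<exists>u\<in>W. arc u w" if "w \<in> W" for w
      using that by blast
    have "W \<inter> R \<noteq> {}"
    proof -
      obtain w where w: "w \<in> W" using psubset.prems by blast
      obtain u where u: "u \<in> W" "arc u w" using pred[OF w] by blast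
      obtain u' where u': "u' \<in> W" "arc u' u" using pred[OF u(1)] by blast
      show ?thesis using u u' arc_between_row_col by blast
    qed
    define p where "p = Max (W \<inter> R)"
    have p: "p \<in> W" "p \<in> R" and p_max: "\<And>r. r \<in> W \<Longrightarrow> r \<in> R \<Longrightarrow> r \<le> p"
      using Max_in[of "W \<inter> R"] Max_ge[of "W \<inter> R"] \<open>W \<inter> R \<noteq> {}\<close> psubset.hyps
      by (auto simp: p_def)
    obtain c where c: "c \<in> W" "arc c p" using pred[OF p(1)] by blast
    obtain r where r: "r \<in> W" "arc r c" using pred[OF c(1)] by blast
    have "c \<notin> R" "r \<in> R" using c r p(2) arc_between_row_col by blast+
    moreover have "r \<noteq> p" using c(2) r(2) arc_asym by blast
    ultimately have "r < p" using p_max[OF r(1)] by simp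
    obtain w where w: "w \<in> W - {p}" "\<forall>u\<in>W - {p}. \<not> arc u w"
      using psubset.IH[of "W - {p}"] psubset.prems c \<open>c \<notin> R\<close> p by blast
    then have "arc p w" using pred by blast
    then have "arc r w" using arc_shortcut \<open>r \<in> R\<close> \<open>r < p\<close> r(2) c(2) by blast
    then show False using w r \<open>r \<noteq> p\<close> by blast
  qed
qed

fun toppled :: "nat \<Rightarrow> nat set" where
  "toppled 0 = {0}"
| "toppled (Suc s) = toppled s \<union>
     {v \<in> (if even s then fcols n R else R - {0}). v \<notin> toppled s \<and> (\<forall>u. arc u v \<longrightarrow> u \<in> toppled s)}"

declare toppled.simps(2) [simp del]

lemma toppled_le: "toppled s \<subseteq> {0..n}"
  by (induction s) (use rows_le in \<open>auto simp: fcols_def toppled.simps\<close>)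

lemma finite_toppled: "finite (toppled s)"
  using toppled_le finite_subset by blast

lemma zero_toppled: "0 \<in> toppled s"
  by (induction s) (auto simp: toppled.simps)

lemma toppled_mono: "s \<le> s' \<Longrightarrow> toppled s \<subseteq> toppled s'"
  by (induction s' rule: dec_induct) (auto simp: toppled.simps)

lemma toppled_arc_closed: "v \<in> toppled s \<Longrightarrow> arc u v \<Longrightarrow> u \<in> toppled s"
  by (induction s) (auto simp: not_arc_into_zero toppled.simps)

lemma toppled_Suc_Suc:
  assumes "v \<le> n" "v \<noteq> 0" "\<forall>u. arc u v \<longrightarrow> u \<in> toppled s"
  shows "v \<in> toppled (Suc (Suc s))"
proof -
  have "\<forall>u. arc u v \<longrightarrow> u \<in> toppled (Suc s)"
    using assms(3) toppled_mono[of s "Suc s"] by auto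
  moreover have "v \<in> (if even s then fcols n R else R - {0}) \<or>
      v \<in> (if even (Suc s) then fcols n R else R - {0})"
    using assms by (auto simp: fcols_iff)
  ultimately show ?thesis
    using assms(3) by (cases "v \<in> toppled (Suc s)") (auto simp: toppled.simps)
qed

lemma toppled_grows:
  assumes "toppled s \<noteq> {0..n}"
  shows "toppled s \<subset> toppled (Suc (Suc s))"
proof -
  obtain w where w: "w \<in> {0..n} - toppled s" "\<forall>u\<in>{0..n} - toppled s. \<not> arc u w"
    using exists_source[of "{0..n} - toppled s"] assms toppled_le by blast
  then have "\<forall>u. arc u w \<longrightarrow> u \<in> toppled s"
    using arc_le by auto
  moreover have "w \<le> n" using w(1) by simp
  moreover have "w \<noteq> 0" using w(1) zero_toppled[of s] by (metis DiffD2)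
  ultimately have "w \<in> toppled (Suc (Suc s))"
    using toppled_Suc_Suc by blast
  then show ?thesis
    using w(1) toppled_mono[of s "Suc (Suc s)"] by auto
qed

lemma card_toppled_ge: "min (Suc k) (Suc n) \<le> card (toppled (2 * k))"
proof (induction k)
  case (Suc k)
  show ?case
  proof (cases "toppled (2 * k) = {0..n}")
    case True
    then have "toppled (2 * Suc k) = {0..n}"
      using toppled_mono[of "2 * k" "2 * Suc k"] toppled_le by fastforce
    then show ?thesis by simp
  next
    case False
    have "2 * Suc k = Suc (Suc (2 * k))" by simp
    then have "card (toppled (2 * k)) < card (toppled (2 * Suc k))"
      using psubset_card_mono[OF finite_toppled toppled_grows[OF False]] by simp
    then show ?thesis using Suc.IH by linarith
  qed
qed simp

lemma toppled_all: "toppled (2 * n) = {0..n}"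
  using card_toppled_ge[of n] toppled_le card_subset_eq[of "{0..n}" "toppled (2 * n)"]
    card_mono[of "{0..n}" "toppled (2 * n)"] by simp

definition level :: "nat \<Rightarrow> nat" where
  "level v = (LEAST s. v \<in> toppled s)"

lemma in_toppled_iff: "v \<le> n \<Longrightarrow> v \<in> toppled s \<longleftrightarrow> level v \<le> s"
  using toppled_all LeastI[of "\<lambda>s. v \<in> toppled s" "2 * n"] Least_le[of "\<lambda>s. v \<in> toppled s"]
    toppled_mono unfolding level_def by fastforce

lemma level_le: "v \<le> n \<Longrightarrow> level v \<le> 2 * n"
  using in_toppled_iff[of v "2 * n"] toppled_all by auto

lemma level_eq_0_iff: "v \<le> n \<Longrightarrow> level v = 0 \<longleftrightarrow> v = 0"
  using in_toppled_iff[of v 0] by auto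

lemma level_Suc:
  assumes "v \<le> n" "level v = Suc s"
  shows "v \<in> (if even s then fcols n R else R - {0})" "\<forall>u. arc u v \<longrightarrow> u \<in> toppled s"
  using in_toppled_iff[OF assms(1), of s] in_toppled_iff[OF assms(1), of "Suc s"] assms(2)
  by (auto simp: toppled.simps)

lemma odd_level_iff:
  assumes "v \<le> n"
  shows "odd (level v) \<longleftrightarrow> v \<in> fcols n R"
proof (cases "level v")
  case 0
  moreover have "v = 0" using 0 assms level_eq_0_iff by blast
  ultimately show ?thesis using zero_row by (simp add: fcols_iff)
next
  case (Suc s)
  then show ?thesis using level_Suc(1)[OF assms Suc] by (auto simp: fcols_iff split: if_splits)
qed

lemma even_level_if_row: "i \<in> R \<Longrightarrow> even (level i)"
  using rows_le odd_level_iff[of i] by (auto simp: fcols_iff)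

lemma odd_level_if_col: "j \<in> fcols n R \<Longrightarrow> odd (level j)"
  using odd_level_iff by (simp add: fcols_iff)

lemma arc_level_less:
  assumes "arc u v"
  shows "level u < level v"
proof -
  have "v \<le> n" "u \<le> n" using assms arc_le by auto
  moreover have "v \<noteq> 0" using assms not_arc_into_zero by metis
  ultimately obtain s where s: "level v = Suc s"
    using level_eq_0_iff not0_implies_Suc by blast
  then have "u \<in> toppled s" using level_Suc(2) assms \<open>v \<le> n\<close> by blast
  then show ?thesis using in_toppled_iff \<open>u \<le> n\<close> s by simp
qed

lemma T_iff_level_less:
  assumes "fcell n R r c"
  shows "T r c \<longleftrightarrow> level r < level c"
proof -
  have "arc r c \<longleftrightarrow> T r c" "arc c r \<longleftrightarrow> \<not> T r c"
    using assms by (auto simp: arc_def fcell_iff)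
  then show ?thesis
    using arc_level_less[of r c] arc_level_less[of c r] by (meson less_asym)
qed

lemma arc_level_parity: "arc u v \<Longrightarrow> odd (level u) \<longleftrightarrow> even (level v)"
  using arc_between_row_col arc_le odd_level_iff by (auto simp: fcols_iff)

lemma exists_arc_into: "v \<le> n \<Longrightarrow> v \<noteq> 0 \<Longrightarrow> \<exists>u. arc u v"
  using row_has_zero T_top_row zero_row
  by (cases "v \<in> R") (auto simp: arc_into_row arc_into_col fcell_iff)

text \<open>Arcs join a row to a column, so the levels at the two ends have different parity;
  an in-neighbour two or more levels below would have let v topple earlier.\<close>
lemma exists_arc_from_prev_level:
  assumes "v \<le> n" "v \<noteq> 0"
  shows "\<exists>u. arc u v \<and> Suc (level u) = level v"
proof (rule ccontr)
  assume none: "\<not> ?thesis"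
  obtain s where s: "level v = Suc s"
    using assms level_eq_0_iff not0_implies_Suc by blast
  have parity_gap: "a + 2 \<le> s" if "odd a \<longleftrightarrow> odd s" "a \<noteq> s" "a < Suc s" for a
    using that by presburger
  have low: "level u + 2 \<le> s" if "arc u v" for u
    using parity_gap none that s arc_level_less[OF that] arc_level_parity[OF that] by auto
  obtain u where "arc u v" using exists_arc_into assms by blast
  then have "s = Suc (Suc (s - 2))" using low by fastforce
  moreover have "\<forall>u. arc u v \<longrightarrow> u \<in> toppled (s - 2)"
    using low arc_le in_toppled_iff by fastforce
  ultimately have "v \<in> toppled s" using toppled_Suc_Suc assms by metis
  then show False using in_toppled_iff assms s by simp
qed

definition layer :: "nat \<Rightarrow> nat set" where
  "layer s = {v. v \<le> n \<and> level v = s}"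

lemma finite_layer: "finite (layer s)"
  by (rule finite_subset[of _ "{0..n}"]) (auto simp: layer_def)

lemma layer_0: "layer 0 = {0}"
  using level_eq_0_iff by (auto simp: layer_def)

lemma layer_Suc: "layer (Suc s) = toppled (Suc s) - toppled s"
  using in_toppled_iff toppled_le by (fastforce simp: layer_def)

lemma layer_Suc_arc: "v \<in> layer (Suc s) \<Longrightarrow> \<exists>u \<in> layer s. arc u v"
  using exists_arc_from_prev_level level_eq_0_iff arc_le
  by (fastforce simp: layer_def)

lemma layer_nonempty_le:
  assumes "s' \<le> s" "layer s \<noteq> {}"
  shows "layer s' \<noteq> {}"
  using assms
proof (induction rule: inc_induct)
  case (step k)
  then show ?case using layer_Suc_arc by blast
qed

lemma fdeg_eq: "fdeg n R v = card {u. arc u v} + card {u. arc v u}"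
proof -
  have "{u \<in> {0..n}. fadj n R v u} = {u. arc u v} \<union> {u. arc v u}"
    using arc_le by (auto simp: fadj_iff_arc)
  moreover have "finite {u. arc u v}" "finite {u. arc v u}"
    using arc_le by (auto intro: finite_subset[of _ "{0..n}"])
  moreover have "{u. arc u v} \<inter> {u. arc v u} = {}"
    by (auto simp: arc_def fcell_iff)
  ultimately show ?thesis by (simp add: fdeg_def card_Un_disjoint)
qed

lemma phiTC_eq: "v \<le> n \<Longrightarrow> v \<noteq> 0 \<Longrightarrow> phiTC n R T v = int (card {u. arc v u})"
  by (cases "v \<in> R") (auto simp: phiTC_def row_ones_def col_zeros_def arc_def fcell_iff fcols_iff)

definition conf :: "nat \<Rightarrow> nat \<Rightarrow> int" where
  "conf s v = phiTC n R T v - (if v \<in> toppled s then int (fdeg n R v) else 0)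
      + int (card {u \<in> toppled s. fadj n R u v})"

lemma unstable_iff:
  assumes "v \<le> n" "v \<noteq> 0"
  shows "int (fdeg n R v) \<le> conf s v \<longleftrightarrow> v \<notin> toppled s \<and> (\<forall>u. arc u v \<longrightarrow> u \<in> toppled s)"
proof -
  define In Out X where "In = {u. arc u v}" and "Out = {u. arc v u}"
    and "X = {u \<in> toppled s. fadj n R u v}"
  have fin: "finite In" "finite Out" "finite X"
    using arc_le finite_toppled
    by (auto simp: In_def Out_def X_def intro: finite_subset[of _ "{0..n}"])
  have "In \<noteq> {}" using exists_arc_into assms by (simp add: In_def)
  then have "card In > 0" using fin by auto
  have deg: "fdeg n R v = card In + card Out"
    by (simp add: fdeg_eq In_def Out_def)
  have conf: "conf s v = int (card Out) - (if v \<in> toppled s then int (fdeg n R v) else 0)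
      + int (card X)"
    using phiTC_eq assms by (simp add: conf_def Out_def X_def)
  show ?thesis
  proof (cases "v \<in> toppled s")
    case True
    have "X \<subseteq> In \<union> Out" by (auto simp: X_def In_def Out_def fadj_iff_arc)
    then have "card X \<le> card In + card Out"
      using card_mono[of "In \<union> Out" X] card_Un_le[of In Out] fin by simp
    then show ?thesis using True conf deg \<open>card In > 0\<close> by simp
  next
    case False
    then have "X \<subseteq> In"
      using toppled_arc_closed by (auto simp: X_def In_def fadj_iff_arc)
    then have "card In \<le> card X \<longleftrightarrow> In \<subseteq> X"
      using fin by (metis card_mono card_seteq subset_antisym)
    then show ?thesis using False conf deg \<open>X \<subseteq> In\<close> by (auto simp: In_def X_def fadj_iff_arc)
  qed
qed

lemma unstable_eq_layer:
  "(if even s then {v \<in> fcols n R. conf s v \<ge> int (fdeg n R v)}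
    else {v \<in> R. v \<noteq> 0 \<and> conf s v \<ge> int (fdeg n R v)}) = layer (Suc s)"
proof -
  let ?K = "if even s then fcols n R else R - {0}"
  have K: "v \<le> n" "v \<noteq> 0" if "v \<in> ?K" for v
    using that rows_le zero_row by (cases v; auto simp: fcols_iff split: if_splits)+
  have "layer (Suc s) = {v \<in> ?K. v \<notin> toppled s \<and> (\<forall>u. arc u v \<longrightarrow> u \<in> toppled s)}"
    by (auto simp: layer_Suc toppled.simps)
  also have "\<dots> = {v \<in> ?K. conf s v \<ge> int (fdeg n R v)}"
    using unstable_iff[OF K] by blast
  finally show ?thesis by auto
qed

lemma topple_layer: "topple n R (layer (Suc s)) (conf s) = conf (Suc s)"
proof
  fix v
  have split: "toppled (Suc s) = toppled s \<union> layer (Suc s)" "toppled s \<inter> layer (Suc s) = {}"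
    using layer_Suc toppled_mono[of s "Suc s"] by auto
  then have "{u \<in> toppled (Suc s). fadj n R u v}
      = {u \<in> toppled s. fadj n R u v} \<union> {u \<in> layer (Suc s). fadj n R u v}"
    by auto
  then have "card {u \<in> toppled (Suc s). fadj n R u v}
      = card {u \<in> toppled s. fadj n R u v} + card {u \<in> layer (Suc s). fadj n R u v}"
    using split finite_toppled finite_layer by (simp add: card_Un_disjoint disjoint_iff)
  then show "topple n R (layer (Suc s)) (conf s) v = conf (Suc s) v"
    using split by (auto simp: topple_def conf_def)
qed

lemma canon_step_eq: "canon_step n R (phiTC n R T) s = (layer s, conf s)"
proof (induction s)
  case 0
  show ?case by (auto simp: layer_0 conf_def topple_def fun_eq_iff)
next
  case (Suc s)
  then show ?case
    by (simp only: canon_step.simps Let_def snd_conv unstable_eq_layer topple_layer)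
qed

lemma layer_row_iff: "v \<in> layer s \<Longrightarrow> v \<in> R \<longleftrightarrow> even s"
  using odd_level_iff by (auto simp: layer_def fcols_iff)

lemma Max_layer_Suc_less:
  assumes "odd s" "layer (Suc s) \<noteq> {}"
  shows "Max (layer (Suc s)) < Max (layer s)"
proof -
  let ?b = "Max (layer (Suc s))"
  have b: "?b \<in> layer (Suc s)" using assms(2) finite_layer Max_in by blast
  then obtain u where u: "u \<in> layer s" "arc u ?b" using layer_Suc_arc by blast
  have "?b \<in> R" using layer_row_iff[OF b] assms(1) by simp
  then have "?b < u" using u(2) by (simp add: arc_into_row fcell_iff)
  also have "u \<le> Max (layer s)" using u(1) finite_layer by simp
  finally show ?thesis .
qed

lemma Min_layer_less_Suc:
  assumes "even s" "layer (Suc s) \<noteq> {}"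
  shows "Min (layer s) < Min (layer (Suc s))"
proof -
  let ?b = "Min (layer (Suc s))"
  have b: "?b \<in> layer (Suc s)" using assms(2) finite_layer Min_in by blast
  then obtain u where u: "u \<in> layer s" "arc u ?b" using layer_Suc_arc by blast
  have "?b \<notin> R" using layer_row_iff[OF b] assms(1) by simp
  then have "u < ?b" using u(2) by (simp add: arc_into_col fcell_iff)
  moreover have "Min (layer s) \<le> u" using u(1) finite_layer by simp
  ultimately show ?thesis by simp
qed

text \<open>The factors of \<Psi>(T): block (2k-1) = inc(V^(k)) and block (2k) = dec(U^(k)).\<close>
definition block :: "nat \<Rightarrow> nat list" where
  "block s = (if odd s then sorted_list_of_set (layer s) else rev (sorted_list_of_set (layer s)))"

lemma set_block: "set (block s) = layer s"
  using finite_layer by (simp add: block_def)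

lemma distinct_block: "distinct (block s)"
  by (simp add: block_def)

lemma Psi_eq: "Psi n R T = concat (map (\<lambda>k. block (Suc k)) [0..<2 * n])"
proof -
  have "Psi n R T = concat (map (\<lambda>k. block (Suc (2 * k)) @ block (Suc (Suc (2 * k)))) [0..<n])"
    unfolding Psi_def V_blk_def U_blk_def canon_block_def canon_step_eq
    by (simp add: block_def upt_conv_Cons map_Suc_upt[symmetric] comp_def del: upt_Suc)
  also have "\<dots> = concat (map (\<lambda>k. block (Suc k)) [0..<2 * n])"
    using concat_map_upt_pairs[of "\<lambda>k. block (Suc k)" n] by simp
  finally show ?thesis .
qed

lemma set_Psi: "set (Psi n R T) = {1..n}"
proof -
  have "set (Psi n R T) = (\<Union>k\<in>{0..<2 * n}. layer (Suc k))"
    by (simp add: Psi_eq set_block)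
  also have "\<dots> = {1..n}"
  proof (intro set_eqI iffI)
    fix v assume "v \<in> (\<Union>k\<in>{0..<2 * n}. layer (Suc k))"
    then have "v \<le> n" "level v \<noteq> 0" by (auto simp: layer_def)
    then show "v \<in> {1..n}" using level_eq_0_iff[of v] by (cases v) auto
  next
    fix v assume v: "v \<in> {1..n}"
    then have "level v \<noteq> 0" "level v \<le> 2 * n" using level_eq_0_iff level_le by auto
    then have "v \<in> layer (Suc (level v - 1))" "level v - 1 \<in> {0..<2 * n}"
      using v by (auto simp: layer_def)
    then show "v \<in> (\<Union>k\<in>{0..<2 * n}. layer (Suc k))" by blast
  qed
  finally show ?thesis .
qed

lemma distinct_Psi: "distinct (Psi n R T)"
  unfolding Psi_eq
  by (rule distinct_concat_map_upt) (auto simp: distinct_block set_block layer_def)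

lemma successively_block: "successively (run_step level) (block s)"
proof -
  let ?xs = "sorted_list_of_set (layer s)"
  have sorted: "successively (<) ?xs"
    by (rule successively_if_sorted_wrt) (rule strict_sorted_list_of_set)
  have level: "level v = s" if "v \<in> set ?xs" for v
    using that finite_layer by (simp add: layer_def)
  show ?thesis
  proof (cases "odd s")
    case True
    have "successively (run_step level) ?xs"
      by (rule successively_mono[OF sorted]) (use True level in \<open>simp add: run_step_def\<close>)
    then show ?thesis using True by (simp add: block_def)
  next
    case False
    have "successively (\<lambda>u v. run_step level v u) ?xs"
      by (rule successively_mono[OF sorted]) (use False level in \<open>simp add: run_step_def\<close>)
    then show ?thesis using False by (simp add: block_def)
  qed
qed

lemma block_boundary:
  assumes "layer (Suc s) \<noteq> {}"
  shows "run_step level (last (block s)) (hd (block (Suc s)))"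
proof -
  have "layer s \<noteq> {}" using layer_nonempty_le[of s "Suc s"] assms by simp
  then have "last (block s) \<in> layer s" "hd (block (Suc s)) \<in> layer (Suc s)"
    using assms set_block last_in_set hd_in_set by (metis set_empty)+
  then have levels: "level (last (block s)) = s" "level (hd (block (Suc s))) = Suc s"
    by (simp_all add: layer_def)
  have "last (block s) < hd (block (Suc s)) \<longleftrightarrow> odd (Suc s)"
  proof (cases "odd s")
    case True
    have "last (block s) = Max (layer s)" "hd (block (Suc s)) = Max (layer (Suc s))"
      using True \<open>layer s \<noteq> {}\<close> assms finite_layer
      by (simp_all add: block_def last_sorted_list_of_set hd_rev)
    then have "hd (block (Suc s)) < last (block s)"
      using Max_layer_Suc_less[OF True assms] by simp
    then show ?thesis using True by simp
  next
    case False
    have "last (block s) = Min (layer s)" "hd (block (Suc s)) = Min (layer (Suc s))"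
      using False \<open>layer s \<noteq> {}\<close> assms finite_layer
      by (simp_all add: block_def hd_sorted_list_of_set last_rev)
    then have "last (block s) < hd (block (Suc s))"
      using Min_layer_less_Suc[OF _ assms] False by simp
    then show ?thesis using False by simp
  qed
  with levels show ?thesis by (simp add: run_step_def)
qed

lemma run_labelling_Psi: "run_labelling level (Psi n R T)"
proof -
  have "n \<noteq> 0" using zero_row last_col by metis
  then have "layer 1 \<noteq> {}"
    using layer_nonempty_le[of 1 "level n"] level_eq_0_iff[of n] by (auto simp: layer_def)
  then have "block 1 \<noteq> []" "hd (block 1) \<in> layer 1"
    using set_block[of 1] hd_in_set by (metis set_empty)+
  moreover have "Psi n R T = block 1 @ concat (map (\<lambda>k. block (Suc k)) [1..<2 * n])"
    using \<open>n \<noteq> 0\<close> by (simp add: Psi_eq upt_conv_Cons del: upt_Suc)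
  ultimately have "level (hd (Psi n R T)) = 1" by (simp add: layer_def)
  moreover have "successively (run_step level) (Psi n R T)"
    unfolding Psi_eq
  proof (rule successively_concat_map_upt)
    fix k assume "block (Suc (Suc k)) \<noteq> []"
    then show "block (Suc k) \<noteq> [] \<and>
        run_step level (last (block (Suc k))) (hd (block (Suc (Suc k))))"
      using layer_nonempty_le[of "Suc k" "Suc (Suc k)"] block_boundary set_block
      by (metis le_SucI order_refl set_empty)
  qed (rule successively_block)
  ultimately show ?thesis by (simp add: run_labelling_def)
qed

lemma A_run_Psi: "A_run (Psi n R T) l = {v \<in> fcols n R. (level v + 1) div 2 = l}"
proof -
  have "v \<in> {1..n} \<and> odd (level v) \<longleftrightarrow> v \<in> fcols n R" for v
    using odd_level_iff[of v] fcols_subset by auto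
  then show ?thesis using A_run_eq[OF run_labelling_Psi] set_Psi by auto
qed

lemma D_run_Psi: "D_run (Psi n R T) l = {v \<in> R. level v div 2 = l}"
proof (cases "l = 0")
  case True
  have "v = 0" if "v \<in> R" "level v div 2 = 0" for v
  proof -
    have "level v = 0" using even_level_if_row[OF that(1)] that(2) by (auto elim: evenE)
    then show ?thesis using level_eq_0_iff rows_le that(1) by auto
  qed
  then show ?thesis using True zero_row level_eq_0_iff[of 0] by (auto simp: D_run_def)
next
  case False
  have "v \<in> R \<and> level v div 2 = l \<longleftrightarrow> v \<in> {1..n} \<and> even (level v) \<and> (level v + 1) div 2 = l" for v
  proof (cases "v = 0 \<or> \<not> v \<le> n")
    case True
    then show ?thesis using False level_eq_0_iff[of 0] rows_le by auto
  next
    case v: False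
    then show ?thesis using odd_level_iff[of v] by (auto simp: fcols_iff elim!: evenE)
  qed
  then show ?thesis using D_run_eq[OF run_labelling_Psi False] set_Psi by auto
qed

lemma row_zeros_eq:
  assumes "i \<in> R"
  shows "card {j. \<exists>k \<le> level i div 2. j \<in> A_run (Psi n R T) k \<and> j > i} = row_zeros n R T i"
proof -
  have parity: "(a + 1) div 2 \<le> b div 2 \<longleftrightarrow> a < b" if "odd a" "even b" for a b :: nat
    using that by presburger
  have even: "even (level i)" using assms by (rule even_level_if_row)
  have "(\<exists>k \<le> level i div 2. j \<in> A_run (Psi n R T) k \<and> j > i) \<longleftrightarrow> fcell n R i j \<and> \<not> T i j"
    for j
  proof -
    have "(\<exists>k \<le> level i div 2. j \<in> A_run (Psi n R T) k \<and> j > i)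
        \<longleftrightarrow> j \<in> fcols n R \<and> (level j + 1) div 2 \<le> level i div 2 \<and> i < j"
      by (auto simp: A_run_Psi)
    also have "\<dots> \<longleftrightarrow> j \<in> fcols n R \<and> level j < level i \<and> i < j"
      using parity[OF odd_level_if_col even] by auto
    also have "\<dots> \<longleftrightarrow> fcell n R i j \<and> \<not> T i j"
    proof (cases "j \<in> fcols n R \<and> i < j")
      case True
      then have "level j \<noteq> level i" using odd_level_if_col[of j] even by auto
      then show ?thesis using True assms T_iff_level_less[of i j] by (auto simp: fcell_def)
    qed (auto simp: fcell_def)
    finally show ?thesis .
  qed
  then show ?thesis by (simp add: row_zeros_def)
qed

lemma col_ones_eq:
  assumes "j \<in> fcols n R"
  shows "card {i. \<exists>k < (level j + 1) div 2. i \<in> D_run (Psi n R T) k \<and> i < j} = col_ones n R T j"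
proof -
  have parity: "a div 2 < (b + 1) div 2 \<longleftrightarrow> a < b" if "even a" "odd b" for a b :: nat
    using that by presburger
  have odd: "odd (level j)" using assms by (rule odd_level_if_col)
  have "{i. \<exists>k < (level j + 1) div 2. i \<in> D_run (Psi n R T) k \<and> i < j}
      = {i \<in> R. level i < level j \<and> i < j}"
    using parity[OF even_level_if_row odd] by (auto simp: D_run_Psi)
  also have "\<dots> = {i. fcell n R i j \<and> T i j}"
    using assms T_iff_level_less by (auto simp: fcell_def)
  finally show ?thesis by (simp add: col_ones_def)
qed

lemma decorated_perm_Psi_iff:
  "decorated_perm n (Psi n R T) a \<longleftrightarrow>
     (\<forall>i \<in> R - {0}. 0 \<le> a i \<and> a i < int (row_zeros n R T i)) \<and>
     (\<forall>j \<in> fcols n R. 0 \<le> a j \<and> a j < int (col_ones n R T j))"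
proof -
  let ?\<pi> = "Psi n R T"
  define bounded where "bounded i \<longleftrightarrow> (\<forall>l.
     (i \<in> D_run ?\<pi> l \<longrightarrow> 0 \<le> a i \<and> a i < int (card {j. \<exists>k \<le> l. j \<in> A_run ?\<pi> k \<and> j > i})) \<and>
     (i \<in> A_run ?\<pi> l \<longrightarrow> 0 \<le> a i \<and> a i < int (card {j. \<exists>k < l. j \<in> D_run ?\<pi> k \<and> j < i})))"
    for i
  have "bounded i \<longleftrightarrow> 0 \<le> a i \<and> a i < int (row_zeros n R T i)" if "i \<in> R" for i
    using that row_zeros_eq[OF that] by (auto simp: bounded_def A_run_Psi D_run_Psi fcols_iff)
  moreover have "bounded j \<longleftrightarrow> 0 \<le> a j \<and> a j < int (col_ones n R T j)" if "j \<in> fcols n R" for j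
    using that col_ones_eq[OF that] by (auto simp: bounded_def A_run_Psi D_run_Psi fcols_iff)
  moreover have "{1..n} = (R - {0}) \<union> fcols n R"
    using rows_le fcols_subset by (auto simp: fcols_iff)
  moreover have "is_perm n ?\<pi>"
    by (simp add: is_perm_def set_Psi distinct_Psi)
  ultimately show ?thesis
    unfolding decorated_perm_def bounded_def[symmetric] by auto
qed

end

theorem lemma5p2:
  fixes n :: nat and R :: "nat set" and T :: "nat \<Rightarrow> nat \<Rightarrow> bool" and a :: "nat \<Rightarrow> int"
  assumes "ferrers n R"
    and "T \<in> EWtab n R"
  shows "decorated_EW n R T a \<longleftrightarrow> decorated_perm n (Psi n R T) a"
proof -
  interpret ew_tableau n R T using assms by unfold_locales
  show ?thesis
    unfolding decorated_EW_def decorated_perm_Psi_iff using assms(2) by blast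
qed

end
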